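(* Let $\lambda\in\mathbb{R}$, let $r,k\ge1$ be integers and let $z\in\mathbb{C}$. Then \[ \phi_{k,\lambda}^{(r,r)}(|z|^2)=e^{-|z|^2}\sum_{n=1}^{\infty}\frac{(|z|^2)^n}{n!}\big((n)_r\big)_{k,\lambda}. \] In particular, when $|z|=1$, \[ \phi_{k,\lambda}^{(r,r)}=\frac{1}{e}\sum_{n=1}^{\infty}\frac{1}{n!}\big((n)_r\big)_{k,\lambda}. \]
   Context: Notation: $(x)_0=1$, $(x)_m=x(x-1)\cdots(x-m+1)$; $(y)_{0,\lambda}=1$, $(y)_{k,\lambda}=y(y-\lambda)\cdots(y-(k-1)\lambda)$. Let $D=\frac{d}{dx}$ and let $x$ also denote multiplication by $x$. The numbers $S_\lambda^{(r,r)}(k,j)$, $0\le j\le kr$, are defined by the operator identity $\prod_{i=0}^{k-1}\big(x^{r}D^{r}-i\lambda\big)=\sum_{j=0}^{kr}S_\lambda^{(r,r)}(k,j)\,x^{j}D^{j}$ (equivalently, the boson normal ordering $\prod_{i=0}^{k-1}\big((a^{\dagger})^{r}a^{r}-i\lambda\big)=\sum_{j=0}^{kr}S_\lambda^{(r,r)}(k,j)(a^{\dagger})^{j}a^{j}$ with $[a,a^{\dagger}]=1$), and $\phi_{k,\lambda}^{(r,r)}(x)=\sum_{j=0}^{kr}S_\lambda^{(r,r)}(k,j)x^j$, $\phi_{k,\lambda}^{(r,r)}=\phi_{k,\lambda}^{(r,r)}(1)$. *)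

theory Defs
  imports "HOL-Analysis.Analysis" "HOL-Computational_Algebra.Polynomial"
begin

definition falling :: "real \<Rightarrow> nat \<Rightarrow> real" where
  "falling x m = (\<Prod>i<m. x - of_nat i)"

definition dfalling :: "real \<Rightarrow> nat \<Rightarrow> real \<Rightarrow> real" where
  "dfalling y k lam = (\<Prod>i<k. y - of_nat i * lam)"

definition xD :: "nat \<Rightarrow> real poly \<Rightarrow> real poly" where
  "xD j p = monom 1 j * (pderiv ^^ j) p"

text \<open>The operator product prod_{i=0}^{k-1} (x^r D^r - i lambda) (the factors commute).\<close>
fun prodop :: "real \<Rightarrow> nat \<Rightarrow> nat \<Rightarrow> real poly \<Rightarrow> real poly" where
  "prodop lam r 0 p = p"
| "prodop lam r (Suc k) p = xD r (prodop lam r k p) - smult (of_nat k * lam) (prodop lam r k p)"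

text \<open>S_lambda^{(r,r)}(k,j), 0 <= j <= kr, defined by the operator identity
  prod_{i<k}(x^r D^r - i lambda) = sum_{j=0}^{kr} S(k,j) x^j D^j (as operators on polynomials).\<close>
definition Sgen :: "real \<Rightarrow> nat \<Rightarrow> nat \<Rightarrow> nat \<Rightarrow> real" where
  "Sgen lam r k = (THE c. (\<forall>j. k * r < j \<longrightarrow> c j = 0) \<and>
       (\<forall>p. prodop lam r k p = (\<Sum>j\<le>k*r. smult (c j) (xD j p))))"

definition phi :: "nat \<Rightarrow> real \<Rightarrow> nat \<Rightarrow> real \<Rightarrow> real" where
  "phi k lam r x = (\<Sum>j\<le>k*r. Sgen lam r k j * x ^ j)"

end

theory Submission
  imports Defs
begin

text \<open>On monomials the operator \<open>x\<^sup>j D\<^sup>j\<close> acts diagonally, \<open>x\<^sup>m \<mapsto> (m)_j x\<^sup>m\<close>.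
  So the operator identity defining \<open>S(k,j)\<close> amounts to the scalar identities
  \<open>((m)_r)_{k,\<lambda>} = \<Sum>\<^sub>j S(k,j) (m)_j\<close> for all \<open>m \<in> \<nat>\<close>. Coefficients with this property
  exist because \<open>((x)_r)_{k,\<lambda>}\<close> is a polynomial of degree \<open>\<le> kr\<close> and the falling factorials
  form a basis; they are unique because the matrix \<open>((m)_j)\<close> is triangular with nonzero
  diagonal. Multiplying by \<open>x\<^sup>m / m!\<close>, summing over \<open>m\<close> and using
  \<open>\<Sum>\<^sub>m x\<^sup>m / m! (m)_j = x\<^sup>j e\<^sup>x\<close> gives \<open>e\<^sup>x \<phi>(x) = \<Sum>\<^sub>m x\<^sup>m / m! ((m)_r)_{k,\<lambda>}\<close>,
  whose \<open>m = 0\<close> term vanishes when \<open>r, k \<ge> 1\<close>.\<close>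

lemma falling_Suc: "falling x (Suc j) = falling x j * (x - of_nat j)"
  by (simp add: falling_def)

lemma falling_Suc_shift: "falling x (Suc j) = x * falling (x - 1) j"
  unfolding falling_def prod.lessThan_Suc_shift by (simp add: algebra_simps)

lemma falling_of_nat_eq_0: "m < j \<Longrightarrow> falling (real m) j = 0"
  unfolding falling_def by (rule prod_zero) (auto intro!: bexI[of _ m])

lemma falling_of_nat_self_neq_0: "falling (real j) j \<noteq> 0"
  unfolding falling_def by (rule prod_pos[THEN less_imp_neq, symmetric]) auto

lemma falling_of_nat_add_mult_fact: "falling (real (i + j)) j * fact i = fact (i + j)"
  by (induction j) (simp_all add: falling_def[of _ 0] falling_Suc_shift)

lemma coeff_funpow_pderiv:
  "coeff ((pderiv ^^ j) p) i = falling (real (i + j)) j * coeff p (i + j)"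
proof (induction j arbitrary: i)
  case 0
  then show ?case by (simp add: falling_def)
next
  case (Suc j)
  have "coeff ((pderiv ^^ Suc j) p) i = real (Suc i) * coeff ((pderiv ^^ j) p) (Suc i)"
    by (simp add: coeff_pderiv)
  also have "\<dots> = real (Suc i) * (falling (real (Suc i + j)) j * coeff p (Suc i + j))"
    using Suc by (simp del: of_nat_add add: of_nat_add[symmetric])
  also have "\<dots> = falling (real (i + Suc j)) (Suc j) * coeff p (i + Suc j)"
    by (simp add: falling_Suc algebra_simps)
  finally show ?case .
qed

lemma coeff_xD: "coeff (xD j p) m = falling (real m) j * coeff p m"
  by (cases "m < j") (simp_all add: xD_def coeff_monom_mult coeff_funpow_pderiv falling_of_nat_eq_0)

lemma coeff_prodop:
  "coeff (prodop lam r k p) m = dfalling (falling (real m) r) k lam * coeff p m"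
  by (induction k) (auto simp: dfalling_def coeff_xD algebra_simps)

lemma prodop_eq_sum_xD_iff:
  "(\<forall>p. prodop lam r k p = (\<Sum>j\<le>N. smult (c j) (xD j p))) \<longleftrightarrow>
   (\<forall>m. (\<Sum>j\<le>N. c j * falling (real m) j) = dfalling (falling (real m) r) k lam)"
proof
  assume op_eq: "\<forall>p. prodop lam r k p = (\<Sum>j\<le>N. smult (c j) (xD j p))"
  show "\<forall>m. (\<Sum>j\<le>N. c j * falling (real m) j) = dfalling (falling (real m) r) k lam"
  proof
    fix m
    have "coeff (prodop lam r k (monom 1 m)) m = coeff (\<Sum>j\<le>N. smult (c j) (xD j (monom 1 m))) m"
      using op_eq by simp
    then show "(\<Sum>j\<le>N. c j * falling (real m) j) = dfalling (falling (real m) r) k lam"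
      by (simp add: coeff_prodop coeff_xD coeff_sum)
  qed
next
  assume scalar_eq: "\<forall>m. (\<Sum>j\<le>N. c j * falling (real m) j) = dfalling (falling (real m) r) k lam"
  show "\<forall>p. prodop lam r k p = (\<Sum>j\<le>N. smult (c j) (xD j p))"
  proof (intro allI poly_eqI)
    fix p m
    have "coeff (\<Sum>j\<le>N. smult (c j) (xD j p)) m = (\<Sum>j\<le>N. c j * falling (real m) j) * coeff p m"
      by (simp add: coeff_sum coeff_xD sum_distrib_left mult_ac)
    then show "coeff (prodop lam r k p) m = coeff (\<Sum>j\<le>N. smult (c j) (xD j p)) m"
      using scalar_eq by (simp add: coeff_prodop)
  qed
qed

definition falling_poly :: "nat \<Rightarrow> real poly" where
  "falling_poly n = (\<Prod>i<n. [:- of_nat i, 1:])"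

lemma poly_falling_poly: "poly (falling_poly n) x = falling x n"
  by (simp add: falling_poly_def poly_prod falling_def)

lemma degree_falling_poly: "degree (falling_poly n) = n"
proof -
  have "degree (falling_poly n) = (\<Sum>i<n. degree [:- of_nat i, 1::real:])"
    unfolding falling_poly_def by (rule degree_prod_sum_eq) auto
  then show ?thesis by simp
qed

lemma lead_coeff_falling_poly: "lead_coeff (falling_poly n) = 1"
  by (simp add: falling_poly_def lead_coeff_prod)

lemma poly_falling_expansion:
  assumes "degree P \<le> N"
  shows "\<exists>c. (\<forall>j>N. c j = 0) \<and> (\<forall>x. poly P x = (\<Sum>j\<le>N. c j * falling x j))"
  using assms
proof (induction N arbitrary: P)
  case 0
  then obtain a where "P = [:a:]"
    using degree0_coeffs by blast
  then show ?case
    by (intro exI[of _ "\<lambda>j. if j = 0 then a else 0"]) (auto simp: falling_def)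
next
  case (Suc N)
  let ?a = "coeff P (Suc N)"
  define Q where "Q = P - smult ?a (falling_poly (Suc N))"
  have "degree Q \<le> N"
  proof (rule degree_le, intro allI impI)
    fix i
    assume "N < i"
    then consider "i = Suc N" | "i > degree P" "i > degree (falling_poly (Suc N))"
      using Suc.prems degree_falling_poly by fastforce
    then show "coeff Q i = 0"
      by cases (auto simp: Q_def coeff_eq_0 lead_coeff_falling_poly[of "Suc N", unfolded degree_falling_poly])
  qed
  then obtain c where c: "\<forall>j>N. c j = 0" "\<forall>x. poly Q x = (\<Sum>j\<le>N. c j * falling x j)"
    using Suc.IH by blast
  have "poly P x = (\<Sum>j\<le>Suc N. (c(Suc N := ?a)) j * falling x j)" for x
  proof -
    have "poly P x = poly Q x + ?a * falling x (Suc N)"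
      by (simp add: Q_def poly_falling_poly)
    then show ?thesis
      using c by simp
  qed
  moreover have "\<forall>j>Suc N. (c(Suc N := ?a)) j = 0"
    using c by simp
  ultimately show ?case
    by blast
qed

lemma falling_expansion_unique:
  assumes "\<forall>j>N. c j = 0" "\<forall>m. (\<Sum>j\<le>N. c j * falling (real m) j) = g m"
    and "\<forall>j>N. d j = 0" "\<forall>m. (\<Sum>j\<le>N. d j * falling (real m) j) = g m"
  shows "c = d"
proof -
  define e where "e j = c j - d j" for j
  have e_expansion: "(\<Sum>j\<le>N. e j * falling (real m) j) = 0" for m
    using assms by (simp add: e_def left_diff_distrib sum_subtractf)
  have "e j = 0" for j
  proof (induction j rule: less_induct)
    case (less j)
    show ?case
    proof (cases "j \<le> N")
      case False
      then show ?thesis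
        using assms by (simp add: e_def)
    next
      case True
      have "0 = (\<Sum>i\<le>N. e i * falling (real j) i)"
        using e_expansion by simp
      also have "\<dots> = e j * falling (real j) j"
      proof (rule sum.mono_neutral_right[where S = "{j}", simplified])
        show "\<forall>i\<in>{..N} - {j}. e i * falling (real j) i = 0"
          using less.IH falling_of_nat_eq_0[of j] by (auto simp: neq_iff)
      qed (use True in auto)
      finally show ?thesis
        using falling_of_nat_self_neq_0 by simp
    qed
  qed
  then show ?thesis
    by (auto simp: e_def)
qed

lemma dfalling_falling_expansion_exists:
  "\<exists>c. (\<forall>j>k * r. c j = 0) \<and>
     (\<forall>m. (\<Sum>j\<le>k * r. c j * falling (real m) j) = dfalling (falling (real m) r) k lam)"
proof -
  define G where "G = (\<Prod>i<k. falling_poly r - [:of_nat i * lam:])"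
  have "degree G \<le> (\<Sum>i<k. degree (falling_poly r - [:of_nat i * lam:]))"
    unfolding G_def using degree_prod_sum_le[of "{..<k}"] by (simp add: o_def)
  also have "\<dots> \<le> (\<Sum>i<k. r)"
    by (intro sum_mono degree_diff_le) (auto simp: degree_falling_poly)
  finally have "degree G \<le> k * r"
    by simp
  moreover have "poly G x = dfalling (falling x r) k lam" for x
    by (simp add: G_def poly_prod poly_falling_poly dfalling_def)
  ultimately show ?thesis
    using poly_falling_expansion[of G "k * r"] by metis
qed

lemma Sgen_falling_expansion:
  "(\<forall>j>k * r. Sgen lam r k j = 0) \<and>
   (\<forall>m. (\<Sum>j\<le>k * r. Sgen lam r k j * falling (real m) j) = dfalling (falling (real m) r) k lam)"
proof -
  have "\<exists>!c. (\<forall>j>k * r. c j = 0) \<and>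
     (\<forall>m. (\<Sum>j\<le>k * r. c j * falling (real m) j) = dfalling (falling (real m) r) k lam)"
    by (rule ex_ex1I[OF dfalling_falling_expansion_exists],
        rule falling_expansion_unique[where g = "\<lambda>m. dfalling (falling (real m) r) k lam"]) auto
  then show ?thesis
    unfolding Sgen_def prodop_eq_sum_xD_iff by (rule theI')
qed

lemma sums_falling_exp: "(\<lambda>n. x ^ n / fact n * falling (real n) j) sums (x ^ j * exp x)"
proof -
  have term_eq: "x ^ (i + j) / fact (i + j) * falling (real (i + j)) j = x ^ j * (x ^ i /\<^sub>R fact i)" for i
    using falling_of_nat_add_mult_fact[of i j] by (simp add: power_add divide_simps)
  have "(\<lambda>i. x ^ (i + j) / fact (i + j) * falling (real (i + j)) j) sums (x ^ j * exp x)"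
    unfolding term_eq by (rule sums_mult[OF exp_converges])
  moreover have "(\<Sum>i<j. x ^ i / fact i * falling (real i) j) = 0"
    by (rule sum.neutral) (auto simp: falling_of_nat_eq_0)
  ultimately show ?thesis
    using sums_iff_shift[where f = "\<lambda>n. x ^ n / fact n * falling (real n) j" and n = j] by simp
qed

lemma sums_dfalling_falling_exp:
  "(\<lambda>n. x ^ n / fact n * dfalling (falling (real n) r) k lam) sums (exp x * phi k lam r x)"
proof -
  let ?S = "Sgen lam r k"
  have "(\<lambda>n. \<Sum>j\<le>k * r. ?S j * (x ^ n / fact n * falling (real n) j))
          sums (\<Sum>j\<le>k * r. ?S j * (x ^ j * exp x))"
    by (intro sums_sum sums_mult sums_falling_exp)
  moreover have "(\<Sum>j\<le>k * r. ?S j * (x ^ n / fact n * falling (real n) j))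
      = x ^ n / fact n * (\<Sum>j\<le>k * r. ?S j * falling (real n) j)" for n
    by (simp add: sum_distrib_left mult_ac)
  ultimately have "(\<lambda>n. x ^ n / fact n * (\<Sum>j\<le>k * r. ?S j * falling (real n) j))
          sums (\<Sum>j\<le>k * r. ?S j * (x ^ j * exp x))"
    by simp
  moreover have "(\<Sum>j\<le>k * r. ?S j * falling (real n) j) = dfalling (falling (real n) r) k lam" for n
    using Sgen_falling_expansion by blast
  moreover have "(\<Sum>j\<le>k * r. ?S j * (x ^ j * exp x)) = exp x * phi k lam r x"
    by (simp add: phi_def sum_distrib_left mult_ac)
  ultimately show ?thesis
    by simp
qed

lemma phi_eq_exp_series:
  assumes "r \<ge> 1" "k \<ge> 1"
  shows "phi k lam r x =
    exp (- x) * (\<Sum>n. x ^ (n+1) / fact (n+1) * dfalling (falling (real (n+1)) r) k lam)"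
proof -
  have "dfalling (falling 0 r) k lam = 0"
    using assms falling_of_nat_eq_0[of 0 r] unfolding dfalling_def
    by (intro prod_zero) (auto intro!: bexI[of _ 0])
  then have "(\<lambda>n. x ^ (n+1) / fact (n+1) * dfalling (falling (real (n+1)) r) k lam)
      sums (exp x * phi k lam r x)"
    using sums_dfalling_falling_exp
      sums_Suc_iff[where f = "\<lambda>n. x ^ n / fact n * dfalling (falling (real n) r) k lam"]
    by simp
  then show ?thesis
    by (simp add: sums_iff exp_minus field_simps)
qed

theorem theorem10:
  fixes lam :: real and r k :: nat and z :: complex
  assumes "r \<ge> 1" and "k \<ge> 1"
  shows "phi k lam r ((cmod z)\<^sup>2) =
           exp (- (cmod z)\<^sup>2) *
             (\<Sum>n. ((cmod z)\<^sup>2) ^ (n+1) / fact (n+1) * dfalling (falling (real (n+1)) r) k lam)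
       \<and> (cmod z = 1 \<longrightarrow>
           phi k lam r 1 = (1 / exp 1) *
             (\<Sum>n. 1 / fact (n+1) * dfalling (falling (real (n+1)) r) k lam))"
  using phi_eq_exp_series[OF assms, of lam "(cmod z)\<^sup>2"] phi_eq_exp_series[OF assms, of lam 1]
  by (simp add: exp_minus divide_inverse mult.commute)

end
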